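(* Let $n\ge2$, let $\mathbf{q}\in\mathbb{R}^n$ with $\sum_i\mathbf{q}_i=1$ and $\mathbf{q}\neq\mathbf{1}/n$, let $q_{\min}=\min_i\mathbf{q}_i$, and let $t\ge1/n$. Define $$\bar{\mathbf{q}}=\frac{\mathbf{1}}{n}+\frac{1}{1-n\,q_{\min}}\Big(\mathbf{q}-\frac{\mathbf{1}}{n}\Big),\qquad \bar{\mathbf{p}}=\frac{\mathbf{1}}{n}+\sqrt{t-\tfrac1n}\,\frac{\mathbf{q}-\mathbf{1}/n}{\|\mathbf{q}-\mathbf{1}/n\|_2}.$$ If $\bar{\mathbf{q}}\cdot\bar{\mathbf{q}}\ge t$, then $\bar{\mathbf{p}}\ge0$ and $\bar{\mathbf{p}}$ maximizes $\mathbf{p}\cdot\mathbf{q}$ over $P(t)$.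
   Context: $\mathbf{1}\in\mathbb{R}^n$ is the all-ones vector. $P(t)=\{\mathbf{p}\in\mathbb{R}^n:\mathbf{p}\ge0,\ \sum_i\mathbf{p}_i=1,\ \mathbf{p}\cdot\mathbf{p}\le t\}$. Inequalities between vectors are componentwise. *)

theory Defs
  imports "HOL-Analysis.Analysis"
begin

definition unif :: "real ^ 'n" where
  "unif = (\<chi> i. 1 / real CARD('n))"

definition Pset :: "real \<Rightarrow> (real ^ 'n) set" where
  "Pset t = {p. (\<forall>i. p $ i \<ge> 0) \<and> (\<Sum>i\<in>UNIV. p $ i) = 1 \<and> p \<bullet> p \<le> t}"

end

theory Submission
  imports Defs
begin

text \<open>Every p with coordinate sum 1 splits orthogonally as p = 1/n + (p - 1/n), where
  the second summand lies in the sum-zero hyperplane. Hence on that affine hyperplane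
  p \<bullet> p = 1/n + |p - 1/n|^2 and p \<bullet> q = 1/n + (p - 1/n) \<bullet> (q - 1/n): over P(t) without the
  sign constraints one maximises a linear functional over a ball of radius
  sqrt (t - 1/n) around 1/n, and Cauchy-Schwarz gives the maximiser pbar on the ray from
  1/n through q. That ray stays nonnegative exactly up to the point qbar, where the
  minimal coordinate of q is sent to 0, so the hypothesis |qbar|^2 \<ge> t says that pbar
  comes before qbar and the sign constraints are inactive.\<close>

definition unif_ray :: "real ^ 'n \<Rightarrow> real \<Rightarrow> real ^ 'n" where
  "unif_ray q k = unif + k *\<^sub>R (q - unif)"

lemma inner_unif: "unif \<bullet> (x :: real ^ 'n) = (\<Sum>i\<in>UNIV. x $ i) / real CARD('n)"
  unfolding inner_vec_def unif_def by (simp add: sum_divide_distrib)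

lemma sum_unif: "(\<Sum>i\<in>UNIV. (unif :: real ^ 'n) $ i) = 1"
  by (simp add: unif_def)

lemma inner_unif_unif: "unif \<bullet> (unif :: real ^ 'n) = 1 / real CARD('n)"
  by (simp only: inner_unif sum_unif)

lemma inner_split_unif:
  fixes x y :: "real ^ 'n"
  assumes "(\<Sum>i\<in>UNIV. x $ i) = 1" and "(\<Sum>i\<in>UNIV. y $ i) = 1"
  shows "x \<bullet> y = 1 / real CARD('n) + (x - unif) \<bullet> (y - unif)"
proof -
  have "(x - unif) \<bullet> (y - unif) = x \<bullet> y - unif \<bullet> x - unif \<bullet> y + unif \<bullet> (unif :: real ^ 'n)"
    by (simp add: inner_diff_left inner_diff_right inner_commute)
  then show ?thesis
    using assms by (simp add: inner_unif inner_unif_unif sum_unif)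
qed

lemma inner_self_split_unif:
  fixes x :: "real ^ 'n"
  assumes "(\<Sum>i\<in>UNIV. x $ i) = 1"
  shows "x \<bullet> x = 1 / real CARD('n) + (norm (x - unif))\<^sup>2"
  using inner_split_unif[OF assms assms] by (simp add: power2_norm_eq_inner)

lemma Pset_iff:
  fixes p :: "real ^ 'n"
  shows "p \<in> Pset t \<longleftrightarrow> (\<forall>i. p $ i \<ge> 0) \<and> (\<Sum>i\<in>UNIV. p $ i) = 1 \<and>
     (norm (p - unif))\<^sup>2 \<le> t - 1 / real CARD('n)"
  unfolding Pset_def using inner_self_split_unif[of p] by auto

lemma Min_less_unif:
  fixes q :: "real ^ 'n"
  assumes "(\<Sum>i\<in>UNIV. q $ i) = 1" and "q \<noteq> unif"
  shows "Min (range (\<lambda>i. q $ i)) < 1 / real CARD('n)"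
proof (rule ccontr)
  assume Min_ge: "\<not> Min (range (\<lambda>i. q $ i)) < 1 / real CARD('n)"
  have ge: "(q - unif) $ i \<ge> 0" for i
  proof -
    have "Min (range (\<lambda>i. q $ i)) \<le> q $ i"
      by (rule Min_le) auto
    then have "1 / real CARD('n) \<le> q $ i"
      using Min_ge by linarith
    then show ?thesis
      by (simp add: unif_def)
  qed
  have "(\<Sum>i\<in>UNIV. (q - unif) $ i) = 0"
    by (simp add: sum_subtractf assms(1) sum_unif)
  then have "(q - unif) $ i = 0" for i
    using ge sum_nonneg_eq_0_iff[of UNIV "\<lambda>i. (q - unif) $ i"] by simp
  then show False
    using assms(2) by (simp add: vec_eq_iff)
qed

lemma sum_unif_ray:
  fixes q :: "real ^ 'n"
  assumes "(\<Sum>i\<in>UNIV. q $ i) = 1"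
  shows "(\<Sum>i\<in>UNIV. unif_ray q k $ i) = 1"
  using assms by (simp add: unif_ray_def sum.distrib sum_subtractf sum_unif
      flip: sum_distrib_left)

lemma inner_self_unif_ray:
  fixes q :: "real ^ 'n"
  assumes "(\<Sum>i\<in>UNIV. q $ i) = 1"
  shows "unif_ray q k \<bullet> unif_ray q k = 1 / real CARD('n) + (k * norm (q - unif))\<^sup>2"
  using inner_self_split_unif[OF sum_unif_ray[OF assms]]
  by (simp add: unif_ray_def power_mult_distrib)

lemma unif_ray_nonneg:
  fixes q :: "real ^ 'n"
  assumes "0 \<le> k" and "k * (1 - real CARD('n) * Min (range (\<lambda>i. q $ i))) \<le> 1"
  shows "unif_ray q k $ i \<ge> 0"
proof -
  let ?n = "real CARD('n)"
  have "k * (?n * Min (range (\<lambda>i. q $ i))) \<le> k * (?n * q $ i)"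
    using assms(1) by (intro mult_left_mono Min_le) auto
  then have "0 \<le> (1 - k) / ?n + k * q $ i"
    using assms(2) by (simp add: field_simps)
  then show ?thesis
    by (simp add: unif_ray_def unif_def algebra_simps diff_divide_distrib)
qed

lemma unif_ray_maximizes_inner:
  fixes p q :: "real ^ 'n"
  assumes "(\<Sum>i\<in>UNIV. p $ i) = 1" and "(\<Sum>i\<in>UNIV. q $ i) = 1" and "q \<noteq> unif"
    and "norm (p - unif) \<le> s"
  shows "p \<bullet> q \<le> unif_ray q (s / norm (q - unif)) \<bullet> q"
proof -
  let ?d = "q - unif"
  have "p \<bullet> q = 1 / real CARD('n) + (p - unif) \<bullet> ?d"
    using inner_split_unif assms(1,2) by blast
  also have "(p - unif) \<bullet> ?d \<le> s * norm ?d"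
    using norm_cauchy_schwarz[of "p - unif" ?d] assms(4)
    by (meson mult_right_mono norm_ge_zero order_trans)
  also have "s * norm ?d = (s / norm ?d) *\<^sub>R ?d \<bullet> ?d"
    using assms(3) by (simp add: power2_norm_eq_inner[symmetric] power2_eq_square)
  also have "1 / real CARD('n) + \<dots> = unif_ray q (s / norm ?d) \<bullet> q"
    using inner_split_unif[OF sum_unif_ray[OF assms(2)] assms(2)]
    by (simp add: unif_ray_def)
  finally show ?thesis by simp
qed

theorem mainTheorem9:
  fixes q :: "real ^ 'n" and t :: real
  assumes n2: "CARD('n) \<ge> 2"
    and qsum: "(\<Sum>i\<in>UNIV. q $ i) = 1"
    and qne: "q \<noteq> unif"
    and tge: "t \<ge> 1 / real CARD('n)"
    and hyp: "let qmin = Min (range (\<lambda>i. q $ i));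
                  qbar = unif + (1 / (1 - real CARD('n) * qmin)) *\<^sub>R (q - unif)
              in qbar \<bullet> qbar \<ge> t"
  shows "let pbar = unif + (sqrt (t - 1 / real CARD('n)) / norm (q - unif)) *\<^sub>R (q - unif)
         in (\<forall>i. pbar $ i \<ge> 0) \<and> pbar \<in> Pset t \<and>
            (\<forall>p \<in> Pset t. p \<bullet> q \<le> pbar \<bullet> q)"
proof -
  define c where "c = 1 - real CARD('n) * Min (range (\<lambda>i. q $ i))"
  define s where "s = sqrt (t - 1 / real CARD('n))"
  define k where "k = s / norm (q - unif)"
  have c_pos: "c > 0"
    using Min_less_unif[OF qsum qne] by (simp add: c_def field_simps)
  have norm_pos: "norm (q - unif) > 0"
    using qne by simp
  have "t - 1 / real CARD('n) \<le> (norm (q - unif) / c)\<^sup>2"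
    using hyp inner_self_unif_ray[OF qsum, of "1 / c"] by (simp add: Let_def unif_ray_def c_def)
  then have "s \<le> norm (q - unif) / c"
    using real_sqrt_le_mono c_pos unfolding s_def by fastforce
  then have "k * c \<le> 1"
    using c_pos norm_pos by (simp add: k_def field_simps)
  moreover have "0 \<le> k"
    using tge by (simp add: k_def s_def)
  ultimately have nonneg: "\<forall>i. unif_ray q k $ i \<ge> 0"
    unfolding c_def by (blast intro: unif_ray_nonneg)
  have "(norm (unif_ray q k - unif))\<^sup>2 = t - 1 / real CARD('n)"
    using norm_pos tge by (simp add: unif_ray_def k_def s_def power_divide)
  then have "unif_ray q k \<in> Pset t"
    using nonneg sum_unif_ray[OF qsum] by (simp add: Pset_iff)
  moreover have "\<forall>p \<in> Pset t. p \<bullet> q \<le> unif_ray q k \<bullet> q"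
    using unif_ray_maximizes_inner[OF _ qsum qne] tge
    by (auto simp: Pset_iff k_def s_def real_le_rsqrt)
  ultimately show ?thesis
    using nonneg by (simp add: Let_def unif_ray_def k_def s_def)
qed

end
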